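(* Let $(\mathcal{C},\wedge,S)$ be a braided monoidal category, $T\in\mathcal{C}$, and $s,t:T\to T$ endomorphisms. The following are equivalent: (1) $\beta_{T,T}=s\wedge t$; (2) $\beta_{T,T}=t\wedge s$; (3) $\beta_{T,T}=ts\wedge\mathrm{id}_T$; (4) $\beta_{T,T}=st\wedge\mathrm{id}_T$; (5) $\beta_{T,T}=\mathrm{id}_T\wedge ts$; (6) $\beta_{T,T}=\mathrm{id}_T\wedge st$.
   Context: $\beta_{T,T}:T\wedge T\to T\wedge T$ is the braiding isomorphism. *)

theory Defs
  imports Main
begin

locale category =
  fixes Ob :: "'o set" and Ar :: "'m set"
    and Dom :: "'m \<Rightarrow> 'o" and Cod :: "'m \<Rightarrow> 'o"
    and idm :: "'o \<Rightarrow> 'm" and C :: "'m \<Rightarrow> 'm \<Rightarrow> 'm"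
  assumes dom_ob: "f \<in> Ar \<Longrightarrow> Dom f \<in> Ob"
    and cod_ob: "f \<in> Ar \<Longrightarrow> Cod f \<in> Ob"
    and id_ar: "a \<in> Ob \<Longrightarrow> idm a \<in> Ar"
    and dom_id: "a \<in> Ob \<Longrightarrow> Dom (idm a) = a"
    and cod_id: "a \<in> Ob \<Longrightarrow> Cod (idm a) = a"
    and comp_ar: "\<lbrakk>f \<in> Ar; g \<in> Ar; Cod f = Dom g\<rbrakk> \<Longrightarrow> C g f \<in> Ar"
    and dom_comp: "\<lbrakk>f \<in> Ar; g \<in> Ar; Cod f = Dom g\<rbrakk> \<Longrightarrow> Dom (C g f) = Dom f"
    and cod_comp: "\<lbrakk>f \<in> Ar; g \<in> Ar; Cod f = Dom g\<rbrakk> \<Longrightarrow> Cod (C g f) = Cod g"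
    and comp_assoc: "\<lbrakk>f \<in> Ar; g \<in> Ar; h \<in> Ar; Cod f = Dom g; Cod g = Dom h\<rbrakk>
                      \<Longrightarrow> C h (C g f) = C (C h g) f"
    and comp_id_left: "f \<in> Ar \<Longrightarrow> C (idm (Cod f)) f = f"
    and comp_id_right: "f \<in> Ar \<Longrightarrow> C f (idm (Dom f)) = f"

definition hom :: "'m set \<Rightarrow> ('m \<Rightarrow> 'o) \<Rightarrow> ('m \<Rightarrow> 'o) \<Rightarrow> 'o \<Rightarrow> 'o \<Rightarrow> 'm set" where
  "hom Ar Dom Cod a b = {f \<in> Ar. Dom f = a \<and> Cod f = b}"

definition is_inverse ::
  "'m set \<Rightarrow> ('m \<Rightarrow> 'o) \<Rightarrow> ('m \<Rightarrow> 'o) \<Rightarrow> ('o \<Rightarrow> 'm) \<Rightarrow> ('m \<Rightarrow> 'm \<Rightarrow> 'm) \<Rightarrow> 'm \<Rightarrow> 'm \<Rightarrow> bool" where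
  "is_inverse Ar Dom Cod idm C f g \<longleftrightarrow>
     f \<in> Ar \<and> g \<in> Ar \<and> Dom g = Cod f \<and> Cod g = Dom f \<and>
     C g f = idm (Dom f) \<and> C f g = idm (Cod f)"

definition is_iso ::
  "'m set \<Rightarrow> ('m \<Rightarrow> 'o) \<Rightarrow> ('m \<Rightarrow> 'o) \<Rightarrow> ('o \<Rightarrow> 'm) \<Rightarrow> ('m \<Rightarrow> 'm \<Rightarrow> 'm) \<Rightarrow> 'm \<Rightarrow> bool" where
  "is_iso Ar Dom Cod idm C f \<longleftrightarrow> (\<exists>g. is_inverse Ar Dom Cod idm C f g)"

definition inv_arr ::
  "'m set \<Rightarrow> ('m \<Rightarrow> 'o) \<Rightarrow> ('m \<Rightarrow> 'o) \<Rightarrow> ('o \<Rightarrow> 'm) \<Rightarrow> ('m \<Rightarrow> 'm \<Rightarrow> 'm) \<Rightarrow> 'm \<Rightarrow> 'm" where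
  "inv_arr Ar Dom Cod idm C f = (THE g. is_inverse Ar Dom Cod idm C f g)"

locale monoidal_category = category Ob Ar Dom Cod idm C
  for Ob :: "'o set" and Ar :: "'m set"
    and Dom :: "'m \<Rightarrow> 'o" and Cod :: "'m \<Rightarrow> 'o"
    and idm :: "'o \<Rightarrow> 'm" and C :: "'m \<Rightarrow> 'm \<Rightarrow> 'm" +
  fixes T :: "'o \<Rightarrow> 'o \<Rightarrow> 'o" and Tm :: "'m \<Rightarrow> 'm \<Rightarrow> 'm" and I :: 'o
    and asc :: "'o \<Rightarrow> 'o \<Rightarrow> 'o \<Rightarrow> 'm" and lu :: "'o \<Rightarrow> 'm" and ru :: "'o \<Rightarrow> 'm"
  assumes unit_ob: "I \<in> Ob"
    and tensor_ob: "\<lbrakk>a \<in> Ob; b \<in> Ob\<rbrakk> \<Longrightarrow> T a b \<in> Ob"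
    and tensor_ar: "\<lbrakk>f \<in> Ar; g \<in> Ar\<rbrakk> \<Longrightarrow> Tm f g \<in> Ar"
    and dom_tensor: "\<lbrakk>f \<in> Ar; g \<in> Ar\<rbrakk> \<Longrightarrow> Dom (Tm f g) = T (Dom f) (Dom g)"
    and cod_tensor: "\<lbrakk>f \<in> Ar; g \<in> Ar\<rbrakk> \<Longrightarrow> Cod (Tm f g) = T (Cod f) (Cod g)"
    and tensor_id: "\<lbrakk>a \<in> Ob; b \<in> Ob\<rbrakk> \<Longrightarrow> Tm (idm a) (idm b) = idm (T a b)"
    and tensor_comp: "\<lbrakk>f \<in> Ar; g \<in> Ar; f' \<in> Ar; g' \<in> Ar; Cod f = Dom g; Cod f' = Dom g'\<rbrakk>
                       \<Longrightarrow> Tm (C g f) (C g' f') = C (Tm g g') (Tm f f')"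
    and assoc_hom: "\<lbrakk>a \<in> Ob; b \<in> Ob; c \<in> Ob\<rbrakk>
                     \<Longrightarrow> asc a b c \<in> hom Ar Dom Cod (T (T a b) c) (T a (T b c))"
    and assoc_iso: "\<lbrakk>a \<in> Ob; b \<in> Ob; c \<in> Ob\<rbrakk> \<Longrightarrow> is_iso Ar Dom Cod idm C (asc a b c)"
    and assoc_nat: "\<lbrakk>f \<in> Ar; g \<in> Ar; h \<in> Ar\<rbrakk>
                     \<Longrightarrow> C (asc (Cod f) (Cod g) (Cod h)) (Tm (Tm f g) h)
                       = C (Tm f (Tm g h)) (asc (Dom f) (Dom g) (Dom h))"
    and lunit_hom: "a \<in> Ob \<Longrightarrow> lu a \<in> hom Ar Dom Cod (T I a) a"
    and lunit_iso: "a \<in> Ob \<Longrightarrow> is_iso Ar Dom Cod idm C (lu a)"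
    and lunit_nat: "f \<in> Ar \<Longrightarrow> C f (lu (Dom f)) = C (lu (Cod f)) (Tm (idm I) f)"
    and runit_hom: "a \<in> Ob \<Longrightarrow> ru a \<in> hom Ar Dom Cod (T a I) a"
    and runit_iso: "a \<in> Ob \<Longrightarrow> is_iso Ar Dom Cod idm C (ru a)"
    and runit_nat: "f \<in> Ar \<Longrightarrow> C f (ru (Dom f)) = C (ru (Cod f)) (Tm f (idm I))"
    and pentagon: "\<lbrakk>a \<in> Ob; b \<in> Ob; c \<in> Ob; d \<in> Ob\<rbrakk>
        \<Longrightarrow> C (asc a b (T c d)) (asc (T a b) c d)
          = C (Tm (idm a) (asc b c d)) (C (asc a (T b c) d) (Tm (asc a b c) (idm d)))"
    and triangle: "\<lbrakk>a \<in> Ob; b \<in> Ob\<rbrakk>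
        \<Longrightarrow> C (Tm (idm a) (lu b)) (asc a I b) = Tm (ru a) (idm b)"

locale braided_monoidal_category = monoidal_category Ob Ar Dom Cod idm C T Tm I asc lu ru
  for Ob :: "'o set" and Ar :: "'m set"
    and Dom :: "'m \<Rightarrow> 'o" and Cod :: "'m \<Rightarrow> 'o"
    and idm :: "'o \<Rightarrow> 'm" and C :: "'m \<Rightarrow> 'm \<Rightarrow> 'm"
    and T :: "'o \<Rightarrow> 'o \<Rightarrow> 'o" and Tm :: "'m \<Rightarrow> 'm \<Rightarrow> 'm" and I :: 'o
    and asc :: "'o \<Rightarrow> 'o \<Rightarrow> 'o \<Rightarrow> 'm" and lu :: "'o \<Rightarrow> 'm" and ru :: "'o \<Rightarrow> 'm" +
  fixes br :: "'o \<Rightarrow> 'o \<Rightarrow> 'm"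
  assumes braid_hom: "\<lbrakk>a \<in> Ob; b \<in> Ob\<rbrakk> \<Longrightarrow> br a b \<in> hom Ar Dom Cod (T a b) (T b a)"
    and braid_iso: "\<lbrakk>a \<in> Ob; b \<in> Ob\<rbrakk> \<Longrightarrow> is_iso Ar Dom Cod idm C (br a b)"
    and braid_nat: "\<lbrakk>f \<in> Ar; g \<in> Ar\<rbrakk>
        \<Longrightarrow> C (br (Cod f) (Cod g)) (Tm f g) = C (Tm g f) (br (Dom f) (Dom g))"
    and hexagon1: "\<lbrakk>a \<in> Ob; b \<in> Ob; c \<in> Ob\<rbrakk>
        \<Longrightarrow> C (asc b c a) (C (br a (T b c)) (asc a b c))
          = C (Tm (idm b) (br a c)) (C (asc b a c) (Tm (br a b) (idm c)))"
    and hexagon2: "\<lbrakk>a \<in> Ob; b \<in> Ob; c \<in> Ob\<rbrakk>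
        \<Longrightarrow> C (inv_arr Ar Dom Cod idm C (asc c a b))
              (C (br (T a b) c) (inv_arr Ar Dom Cod idm C (asc a b c)))
          = C (Tm (br a c) (idm b))
              (C (inv_arr Ar Dom Cod idm C (asc a c b)) (Tm (idm a) (br b c)))"

end

theory Submission
  imports Defs
begin

text \<open>The self-braiding \<beta> of X is natural and invertible, so it can be cancelled.
  Naturality turns \<beta> = s \<otimes> t into \<beta> = t \<otimes> s and, after sliding factors of s and t
  across the tensor, into \<beta> = (t \<circ> s) \<otimes> id. Once \<beta> = u \<otimes> id for some u, naturality forces
  f \<otimes> id = id \<otimes> f for every endomorphism f of X, and then all six tensors in the
  statement coincide with s \<otimes> t. Conversely each of the six conditions is of the form
  \<beta> = u \<otimes> v, so each of them implies this collapse.\<close>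

context category
begin

abbreviation End :: "'o \<Rightarrow> 'm set" where
  "End a \<equiv> hom Ar Dom Cod a a"

lemma id_in_hom: "a \<in> Ob \<Longrightarrow> idm a \<in> hom Ar Dom Cod a a"
  by (simp add: hom_def id_ar dom_id cod_id)

lemma comp_in_hom:
  "f \<in> hom Ar Dom Cod a b \<Longrightarrow> g \<in> hom Ar Dom Cod b c \<Longrightarrow> C g f \<in> hom Ar Dom Cod a c"
  by (simp add: hom_def comp_ar dom_comp cod_comp)

lemma comp_id_left_hom: "f \<in> hom Ar Dom Cod a b \<Longrightarrow> C (idm b) f = f"
  using comp_id_left by (auto simp: hom_def)

lemma comp_id_right_hom: "f \<in> hom Ar Dom Cod a b \<Longrightarrow> C f (idm a) = f"
  using comp_id_right by (auto simp: hom_def)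

lemma comp_assoc_hom:
  "\<lbrakk>f \<in> hom Ar Dom Cod a b; g \<in> hom Ar Dom Cod b c; h \<in> hom Ar Dom Cod c d\<rbrakk>
    \<Longrightarrow> C h (C g f) = C (C h g) f"
  using comp_assoc by (auto simp: hom_def)

lemma iso_cancel_right:
  assumes iso: "is_iso Ar Dom Cod idm C h" and h: "h \<in> hom Ar Dom Cod a b"
    and f: "f \<in> hom Ar Dom Cod b c" and g: "g \<in> hom Ar Dom Cod b c"
    and eq: "C f h = C g h"
  shows "f = g"
proof -
  obtain h' where h': "is_inverse Ar Dom Cod idm C h h'"
    using iso by (auto simp: is_iso_def)
  then have h'_hom: "h' \<in> hom Ar Dom Cod b a" and hh': "C h h' = idm b"
    using h by (auto simp: is_inverse_def hom_def)
  have "f = C (C f h) h'"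
    using comp_assoc_hom[OF h'_hom h f] hh' comp_id_right_hom[OF f] by simp
  also have "\<dots> = g"
    using comp_assoc_hom[OF h'_hom h g] hh' comp_id_right_hom[OF g] eq by simp
  finally show ?thesis .
qed

end

context monoidal_category
begin

lemma tensor_in_hom:
  "f \<in> hom Ar Dom Cod a b \<Longrightarrow> g \<in> hom Ar Dom Cod c d
    \<Longrightarrow> Tm f g \<in> hom Ar Dom Cod (T a c) (T b d)"
  by (simp add: hom_def tensor_ar dom_tensor cod_tensor)

lemma tensor_comp_hom:
  "\<lbrakk>f \<in> hom Ar Dom Cod a b; g \<in> hom Ar Dom Cod b c;
    f' \<in> hom Ar Dom Cod a' b'; g' \<in> hom Ar Dom Cod b' c'\<rbrakk>
    \<Longrightarrow> C (Tm g g') (Tm f f') = Tm (C g f) (C g' f')"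
  using tensor_comp by (auto simp: hom_def)

lemma tensor_eq_left_after_right:
  assumes f: "f \<in> hom Ar Dom Cod a b" and g: "g \<in> hom Ar Dom Cod c d"
  shows "Tm f g = C (Tm f (idm d)) (Tm (idm a) g)"
proof -
  have "a \<in> Ob" "d \<in> Ob"
    using f g dom_ob cod_ob by (auto simp: hom_def)
  then show ?thesis
    using tensor_comp_hom[OF id_in_hom f g id_in_hom] comp_id_right_hom[OF f]
      comp_id_left_hom[OF g] by simp
qed

lemma tensor_eq_right_after_left:
  assumes f: "f \<in> hom Ar Dom Cod a b" and g: "g \<in> hom Ar Dom Cod c d"
  shows "Tm f g = C (Tm (idm b) g) (Tm f (idm c))"
proof -
  have "b \<in> Ob" "c \<in> Ob"
    using f g dom_ob cod_ob by (auto simp: hom_def)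
  then show ?thesis
    using tensor_comp_hom[OF f id_in_hom id_in_hom g] comp_id_left_hom[OF f]
      comp_id_right_hom[OF g] by simp
qed

end

context braided_monoidal_category
begin

lemma self_braid_cancel_right:
  assumes X: "X \<in> Ob" and f: "f \<in> End (T X X)" and g: "g \<in> End (T X X)"
    and eq: "C f (br X X) = C g (br X X)"
  shows "f = g"
  using iso_cancel_right[OF braid_iso[OF X X] braid_hom[OF X X] f g eq] .

lemma self_braid_tensor_swap:
  assumes X: "X \<in> Ob" and s: "s \<in> End X" and t: "t \<in> End X"
    and b: "br X X = Tm s t"
  shows "br X X = Tm t s"
proof (rule self_braid_cancel_right[OF X])
  show "C (br X X) (br X X) = C (Tm t s) (br X X)"
    using braid_nat[of s t] s t b by (simp add: hom_def)
qed (use X s t tensor_in_hom braid_hom in auto)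

lemma self_braid_tensor_eq_left_whisker:
  assumes X: "X \<in> Ob" and s: "s \<in> End X" and t: "t \<in> End X"
    and b: "br X X = Tm s t"
  shows "br X X = Tm (C t s) (idm X)"
proof -
  let ?b = "br X X"
  have id: "idm X \<in> End X" and ts: "C t s \<in> End X" and tt: "C t t \<in> End X"
    using X s t by (auto intro: id_in_hom comp_in_hom)
  have slide_left: "Tm (C s f) t = Tm s (C f t)" if f: "f \<in> End X" for f
  proof -
    have "C ?b (Tm f (idm X)) = C (Tm (idm X) f) ?b"
      using braid_nat[of f "idm X"] f id by (simp add: hom_def)
    then show ?thesis
      using b tensor_comp_hom[OF f s id t] tensor_comp_hom[OF s id t f]
        comp_id_right_hom[OF t] comp_id_left_hom[OF s] by simp
  qed
  have slide_right: "Tm s (C t f) = Tm (C f s) t" if f: "f \<in> End X" for f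
  proof -
    have "C ?b (Tm (idm X) f) = C (Tm f (idm X)) ?b"
      using braid_nat[of "idm X" f] f id by (simp add: hom_def)
    then show ?thesis
      using b tensor_comp_hom[OF id s f t] tensor_comp_hom[OF s f t id]
        comp_id_left_hom[OF t] comp_id_right_hom[OF s] by simp
  qed
  have "C ?b ?b = Tm (C s t) (C t s)"
    using b self_braid_tensor_swap[OF X s t b] tensor_comp_hom[OF t s s t] by metis
  also have "\<dots> = C (Tm (C s t) t) (Tm (idm X) s)"
    using tensor_comp_hom[OF id _ s t, of "C s t"] comp_in_hom[OF t s]
      comp_id_right_hom[of "C s t"] by simp
  also have "\<dots> = C (Tm s (C t t)) (Tm (idm X) s)"
    using slide_left[OF t] by simp
  also have "\<dots> = Tm s (C t (C t s))"
    using tensor_comp_hom[OF id s s tt] comp_id_right_hom[OF s] comp_assoc_hom[OF s t t]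
    by simp
  also have "\<dots> = Tm (C (C t s) s) t"
    using slide_right[OF ts] by simp
  also have "\<dots> = C (Tm (C t s) (idm X)) ?b"
    using b tensor_comp_hom[OF s ts t id] comp_id_left_hom[OF t] by simp
  finally have "C ?b ?b = C (Tm (C t s) (idm X)) ?b" .
  then show ?thesis
    using self_braid_cancel_right[OF X] braid_hom[OF X X] tensor_in_hom[OF ts id] by metis
qed

lemma self_braid_left_whisker_imp_central:
  assumes X: "X \<in> Ob" and u: "u \<in> End X" and b: "br X X = Tm u (idm X)"
    and f: "f \<in> End X"
  shows "Tm f (idm X) = Tm (idm X) f"
proof (rule self_braid_cancel_right[OF X])
  have id: "idm X \<in> End X"
    using X by (rule id_in_hom)
  have bR: "br X X = Tm (idm X) u"
    using self_braid_tensor_swap[OF X u id b] .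
  have "C (Tm (idm X) f) (br X X) = C (br X X) (Tm f (idm X))"
    using braid_nat[of f "idm X"] f id by (simp add: hom_def)
  also have "\<dots> = Tm f u"
    using bR tensor_eq_right_after_left[OF f u] by simp
  also have "\<dots> = C (Tm f (idm X)) (br X X)"
    using bR tensor_eq_left_after_right[OF f u] by simp
  finally show "C (Tm f (idm X)) (br X X) = C (Tm (idm X) f) (br X X)" ..
qed (use X f id_in_hom tensor_in_hom in auto)

lemma self_braid_tensor_imp_central:
  assumes X: "X \<in> Ob" and u: "u \<in> End X" and v: "v \<in> End X"
    and b: "br X X = Tm u v" and f: "f \<in> End X"
  shows "Tm f (idm X) = Tm (idm X) f"
  using self_braid_left_whisker_imp_central[OF X comp_in_hom[OF u v]
      self_braid_tensor_eq_left_whisker[OF X u v b] f] .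

lemma central_tensor_eq_left_whisker:
  assumes s: "s \<in> End X" and t: "t \<in> End X"
    and central: "\<And>f. f \<in> End X \<Longrightarrow> Tm f (idm X) = Tm (idm X) f"
  shows "Tm s t = Tm (C s t) (idm X)" and "Tm s t = Tm (C t s) (idm X)"
proof -
  have X: "X \<in> Ob"
    using s dom_ob by (auto simp: hom_def)
  have L_comp: "Tm (C g f) (idm X) = C (Tm g (idm X)) (Tm f (idm X))"
    if "f \<in> End X" "g \<in> End X" for f g
    using tensor_comp_hom[OF that id_in_hom[OF X] id_in_hom[OF X]]
      comp_id_left_hom[OF id_in_hom[OF X]] by simp
  show "Tm s t = Tm (C s t) (idm X)"
    using tensor_eq_left_after_right[OF s t] central[OF t] L_comp[OF t s] by simp
  show "Tm s t = Tm (C t s) (idm X)"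
    using tensor_eq_right_after_left[OF s t] central[OF t] L_comp[OF s t] by simp
qed

end

theorem proposition3p1:
  fixes Ob :: "'o set" and Ar :: "'m set"
    and Dom :: "'m \<Rightarrow> 'o" and Cod :: "'m \<Rightarrow> 'o"
    and idm :: "'o \<Rightarrow> 'm" and C :: "'m \<Rightarrow> 'm \<Rightarrow> 'm"
    and T :: "'o \<Rightarrow> 'o \<Rightarrow> 'o" and Tm :: "'m \<Rightarrow> 'm \<Rightarrow> 'm" and I :: 'o
    and asc :: "'o \<Rightarrow> 'o \<Rightarrow> 'o \<Rightarrow> 'm" and lu :: "'o \<Rightarrow> 'm" and ru :: "'o \<Rightarrow> 'm"
    and br :: "'o \<Rightarrow> 'o \<Rightarrow> 'm"
    and X :: 'o and s t :: 'm
  assumes "braided_monoidal_category Ob Ar Dom Cod idm C T Tm I asc lu ru br"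
    and "X \<in> Ob"
    and "s \<in> hom Ar Dom Cod X X" and "t \<in> hom Ar Dom Cod X X"
  shows "(br X X = Tm s t \<longleftrightarrow> br X X = Tm t s)
       \<and> (br X X = Tm s t \<longleftrightarrow> br X X = Tm (C t s) (idm X))
       \<and> (br X X = Tm s t \<longleftrightarrow> br X X = Tm (C s t) (idm X))
       \<and> (br X X = Tm s t \<longleftrightarrow> br X X = Tm (idm X) (C t s))
       \<and> (br X X = Tm s t \<longleftrightarrow> br X X = Tm (idm X) (C s t))"
proof -
  interpret braided_monoidal_category Ob Ar Dom Cod idm C T Tm I asc lu ru br
    by fact
  note X = \<open>X \<in> Ob\<close> and s = \<open>s \<in> End X\<close> and t = \<open>t \<in> End X\<close>
  have id: "idm X \<in> End X" and st: "C s t \<in> End X" and ts: "C t s \<in> End X"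
    using X s t by (auto intro: id_in_hom comp_in_hom)
  define central where "central \<longleftrightarrow> (\<forall>f \<in> End X. Tm f (idm X) = Tm (idm X) f)"
  have central_if_braid_is_tensor: "central" if "br X X = Tm u v" "u \<in> End X" "v \<in> End X" for u v
    using self_braid_tensor_imp_central[OF X that(2,3,1)] by (simp add: central_def)
  have "central" if "br X X = Tm s t \<or> br X X = Tm t s
      \<or> br X X = Tm (C t s) (idm X) \<or> br X X = Tm (C s t) (idm X)
      \<or> br X X = Tm (idm X) (C t s) \<or> br X X = Tm (idm X) (C s t)"
    using that central_if_braid_is_tensor s t id st ts by blast
  moreover have "Tm t s = Tm s t \<and> Tm (C t s) (idm X) = Tm s t \<and> Tm (C s t) (idm X) = Tm s t
      \<and> Tm (idm X) (C t s) = Tm s t \<and> Tm (idm X) (C s t) = Tm s t" if central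
    using that central_tensor_eq_left_whisker[OF s t] central_tensor_eq_left_whisker[OF t s]
      st ts unfolding central_def by metis
  ultimately show ?thesis
    by metis
qed

end
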